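(* Let $D\in\{0,1\}$, and let $M(0),M(1)\in\{0,1\}$ and $Y(d,m)\in\{0,1\}$ for $d,m\in\{0,1\}$ be random variables such that $D$, $\{M(0),M(1)\}$ and $\{Y(0,0),Y(0,1),Y(1,0),Y(1,1)\}$ are mutually independent, and such that $Y(0,0)=Y(1,0)=0$ almost surely. Define $M=M(D)$, $Y(d)=Y(d,M(d))$ and $Y=Y(D)$. Let $\beta_M=\mathbb{E}[M(1)-M(0)]$, $\beta_Y=\mathbb{E}[Y(1,1)-Y(0,1)]$, and define the principal stratum $S$ by $S=\mathrm{al}$ if $M(0)=M(1)=1$, $S=\mathrm{mi}$ if $M(0)=0,M(1)=1$, $S=\mathrm{ma}$ if $M(0)=1,M(1)=0$, $S=\mathrm{ne}$ if $M(0)=M(1)=0$. Let $$\boldsymbol\theta=\begin{pmatrix}\mathbb{E}[Y(1)-Y(0)\mid S=\mathrm{al}]\\ \mathbb{E}[Y(1)-Y(0)\mid S=\mathrm{mi}]\\ \mathbb{E}[Y(1)-Y(0)\mid S=\mathrm{ma}]\\ \mathbb{E}[Y(1)-Y(0)\mid S=\mathrm{ne}]\end{pmatrix}=\begin{pmatrix}\beta_Y\\ \beta_Y+\mathbb{E}[Y(0,1)]\\ -\mathbb{E}[Y(0,1)]\\ 0\end{pmatrix}$$ (where the conditional expectations are defined). Then, whenever the relevant conditioning events have positive probability, each of the estimands $\mathrm{ATE}_{M=1}=\mathbb{E}[Y(1)-Y(0)\mid M=1]$, $\mathrm{ATT}_{M=1}=\mathbb{E}[Y(1)-Y(0)\mid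 D=1,M=1]$, $\mathrm{ATE}=\mathbb{E}[Y(1)-Y(0)]$ and $\mathrm{ATT}=\mathbb{E}[Y(1)-Y(0)\mid D=1]$ equals $(\mathbf{w}^T\boldsymbol\theta)/(\mathbf{w}^T\mathbf{1})$, where $\mathbf 1$ is the all-ones vector and the weight vector $\mathbf w$ is, respectively, $$\mathbf{w}(\mathrm{ATE}_{M=1})=\begin{pmatrix}P(S=\mathrm{al})\\ [P(S=\mathrm{ma})+\beta_M]\,P(D=1)\\ P(S=\mathrm{ma})\,P(D=0)\\ 0\end{pmatrix},\quad \mathbf{w}(\mathrm{ATT}_{M=1})=\begin{pmatrix}P(S=\mathrm{al})\\ P(S=\mathrm{ma})+\beta_M\\ 0\\ 0\end{pmatrix},$$ $$\mathbf{w}(\mathrm{ATE})=\mathbf{w}(\mathrm{ATT})=\begin{pmatrix}P(S=\mathrm{al})\\ P(S=\mathrm{mi})\\ P(S=\mathrm{ma})\\ P(S=\mathrm{ne})\end{pmatrix}=\begin{pmatrix}P(S=\mathrm{al})\\ P(S=\mathrm{ma})+\beta_M\\ P(S=\mathrm{ma})\\ P(S=\mathrm{ne})\end{pmatrix}.$$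
   Context: Setting: each unit is a police–civilian encounter. $D$ is the civilian's race ($D=1$ minority), $M(d)$ the potential indicator of detainment/stop under race $d$, $Y(d,m)$ the potential indicator of police use of force under race $d$ and detainment status $m$. The variables arise from a nonparametric structural equation model with independent errors $D=f_D(\epsilon_D)$, $M=f_M(D,\epsilon_M)$, $Y=f_Y(D,M,\epsilon_Y)$ with $M(d)=f_M(d,\epsilon_M)$, $Y(d,m)=f_Y(d,m,\epsilon_Y)$, which yields the stated mutual independence. The condition $Y(0,0)=Y(1,0)=0$ ("mandatory reporting", part (i)) says there is no use of force without a stop. No monotonicity $M(1)\ge M(0)$ is assumed. *)

theory Defs
  imports "HOL-Probability.Probability"
begin

text \<open>Principal strata: al (always stopped), mi (stopped only if minority),
  ma (stopped only if majority), ne (never stopped).\<close>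
datatype stratum = Al | Mi | Ma | Ne

text \<open>Potential detainment M(d) is Mp d, potential force Y(d,m) is Yp d m (True = 1).\<close>

definition Mobs :: "('a \<Rightarrow> bool) \<Rightarrow> (bool \<Rightarrow> 'a \<Rightarrow> bool) \<Rightarrow> 'a \<Rightarrow> bool" where
  "Mobs D Mp x = Mp (D x) x"

definition Ypot :: "(bool \<Rightarrow> 'a \<Rightarrow> bool) \<Rightarrow> (bool \<Rightarrow> bool \<Rightarrow> 'a \<Rightarrow> bool) \<Rightarrow> bool \<Rightarrow> 'a \<Rightarrow> bool" where
  "Ypot Mp Yp d x = Yp d (Mp d x) x"

definition Yobs :: "('a \<Rightarrow> bool) \<Rightarrow> (bool \<Rightarrow> 'a \<Rightarrow> bool) \<Rightarrow> (bool \<Rightarrow> bool \<Rightarrow> 'a \<Rightarrow> bool) \<Rightarrow> 'a \<Rightarrow> bool" where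
  "Yobs D Mp Yp x = Ypot Mp Yp (D x) x"

definition strat :: "(bool \<Rightarrow> 'a \<Rightarrow> bool) \<Rightarrow> 'a \<Rightarrow> stratum" where
  "strat Mp x = (if Mp False x \<and> Mp True x then Al
                 else if \<not> Mp False x \<and> Mp True x then Mi
                 else if Mp False x \<and> \<not> Mp True x then Ma
                 else Ne)"

definition effect :: "(bool \<Rightarrow> 'a \<Rightarrow> bool) \<Rightarrow> (bool \<Rightarrow> bool \<Rightarrow> 'a \<Rightarrow> bool) \<Rightarrow> 'a \<Rightarrow> real" where
  "effect Mp Yp x = of_bool (Ypot Mp Yp True x) - of_bool (Ypot Mp Yp False x)"

definition cond_exp_ev :: "'a measure \<Rightarrow> ('a \<Rightarrow> real) \<Rightarrow> 'a set \<Rightarrow> real" where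
  "cond_exp_ev P f A = (\<integral>x. f x * indicator A x \<partial>P) / measure P A"

definition wavg :: "(stratum \<Rightarrow> real) \<Rightarrow> (stratum \<Rightarrow> real) \<Rightarrow> real" where
  "wavg w \<theta> = (w Al * \<theta> Al + w Mi * \<theta> Mi + w Ma * \<theta> Ma + w Ne * \<theta> Ne)
               / (w Al + w Mi + w Ma + w Ne)"

end

theory Submission
  imports Defs
begin

text \<open>Mandatory reporting gives \<open>Y(d) = M(d) Y(d,1)\<close> almost surely, so the individual effect is
  \<open>M(1) Y(1,1) - M(0) Y(0,1)\<close>. Multiplied by any function of \<open>D\<close> and of \<open>(M(0), M(1))\<close>, this is a
  difference of two products of functions of the three independent blocks, whose expectations
  factor. Taking the stratum indicators gives \<open>\<theta>\<close>; taking the indicators of \<open>M = 1\<close>, \<open>D = 1\<close> and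
  \<open>D = M = 1\<close> shows that each estimand averages the stratum effects with weights proportional to
  \<open>P(S = s)\<close> times the probability of the conditioning event given \<open>S = s\<close>.\<close>

lemma (in prob_space) indep_vars_integral_prod_bounded:
  fixes X :: "'i \<Rightarrow> 'a \<Rightarrow> 'b" and F :: "'i \<Rightarrow> 'b \<Rightarrow> real"
  assumes I: "finite I" and indep: "indep_vars (\<lambda>_. count_space UNIV) X I"
    and bnd: "\<And>i. i \<in> I \<Longrightarrow> bounded (range (F i))"
  shows "integrable M (\<lambda>x. \<Prod>i\<in>I. F i (X i x))"
    and "(\<integral>x. (\<Prod>i\<in>I. F i (X i x)) \<partial>M) = (\<Prod>i\<in>I. \<integral>x. F i (X i x) \<partial>M)"
proof -
  have indep': "indep_vars (\<lambda>_. borel) (\<lambda>i. F i \<circ> X i) I"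
    by (rule indep_vars_compose[OF indep]) simp
  have int: "integrable M (F i \<circ> X i)" if i: "i \<in> I" for i
  proof -
    obtain B where "\<forall>y. norm (F i y) \<le> B" using bnd[OF i] by (auto simp: bounded_iff)
    moreover have "F i \<circ> X i \<in> borel_measurable M"
      using indep' i by (auto simp: indep_vars_def)
    ultimately show ?thesis by (intro integrable_const_bound[where B=B]) auto
  qed
  show "integrable M (\<lambda>x. \<Prod>i\<in>I. F i (X i x))"
    using indep_vars_integrable[OF I indep' int] by simp
  show "(\<integral>x. (\<Prod>i\<in>I. F i (X i x)) \<partial>M) = (\<Prod>i\<in>I. \<integral>x. F i (X i x) \<partial>M)"
    using indep_vars_lebesgue_integral[OF I indep' int] by simp
qed

lemma measure_Collect_eq_integral: "measure M {x \<in> space M. Q x} = (\<integral>x. of_bool (Q x) \<partial>M)"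
proof -
  have "measure M {x \<in> space M. Q x} = (\<integral>x. indicator {x \<in> space M. Q x} x \<partial>M)"
    by (simp add: Int_absorb2)
  also have "\<dots> = (\<integral>x. of_bool (Q x) \<partial>M)"
    by (rule Bochner_Integration.integral_cong) (auto simp: indicator_def)
  finally show ?thesis .
qed

lemma cond_exp_ev_Collect:
  "cond_exp_ev M f {x \<in> space M. Q x} = (\<integral>x. f x * of_bool (Q x) \<partial>M) / (\<integral>x. of_bool (Q x) \<partial>M)"
proof -
  have "(\<integral>x. f x * indicator {x \<in> space M. Q x} x \<partial>M) = (\<integral>x. f x * of_bool (Q x) \<partial>M)"
    by (rule Bochner_Integration.integral_cong) (auto simp: indicator_def)
  then show ?thesis
    by (simp add: cond_exp_ev_def measure_Collect_eq_integral)
qed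

lemma wavg_cong_weighted:
  assumes "\<And>s. w s * \<theta> s = w s * \<theta>' s"
  shows "wavg w \<theta> = wavg w \<theta>'"
  unfolding wavg_def assms ..

definition pair_stratum :: "bool \<times> bool \<Rightarrow> stratum" where
  "pair_stratum p = (case p of
      (True, True) \<Rightarrow> Al | (False, True) \<Rightarrow> Mi | (True, False) \<Rightarrow> Ma | (False, False) \<Rightarrow> Ne)"

lemma strat_eq_pair_stratum: "strat Mp x = pair_stratum (Mp False x, Mp True x)"
  by (simp add: strat_def pair_stratum_def split: bool.split)

definition potential_blocks ::
    "('a \<Rightarrow> bool) \<Rightarrow> (bool \<Rightarrow> 'a \<Rightarrow> bool) \<Rightarrow> (bool \<Rightarrow> bool \<Rightarrow> 'a \<Rightarrow> bool) \<Rightarrow> nat \<Rightarrow> 'a \<Rightarrow> bool list"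
  where "potential_blocks D Mp Yp = (\<lambda>i x.
    if i = 0 then [D x]
    else if i = 1 then [Mp False x, Mp True x]
    else [Yp False False x, Yp False True x, Yp True False x, Yp True True x])"

locale stop_force_model = prob_space P for P :: "'a measure" +
  fixes D :: "'a \<Rightarrow> bool"
    and Mp :: "bool \<Rightarrow> 'a \<Rightarrow> bool"
    and Yp :: "bool \<Rightarrow> bool \<Rightarrow> 'a \<Rightarrow> bool"
  assumes indep_blocks: "indep_vars (\<lambda>_. count_space UNIV) (potential_blocks D Mp Yp) {0, 1, 2}"
    and mandatory_reporting: "AE x in P. \<not> Yp False False x \<and> \<not> Yp True False x"
begin

definition Mpair :: "'a \<Rightarrow> bool \<times> bool" where
  "Mpair x = (Mp False x, Mp True x)"

definition Yquad :: "'a \<Rightarrow> bool \<times> bool \<times> bool \<times> bool" where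
  "Yquad x = (Yp False False x, Yp False True x, Yp True False x, Yp True True x)"

lemma integral_factorizes:
  fixes f :: "bool \<Rightarrow> real" and g :: "bool \<times> bool \<Rightarrow> real"
    and h :: "bool \<times> bool \<times> bool \<times> bool \<Rightarrow> real"
  shows "integrable P (\<lambda>x. f (D x) * g (Mpair x) * h (Yquad x))"
    and "(\<integral>x. f (D x) * g (Mpair x) * h (Yquad x) \<partial>P)
         = (\<integral>x. f (D x) \<partial>P) * (\<integral>x. g (Mpair x) \<partial>P) * (\<integral>x. h (Yquad x) \<partial>P)"
proof -
  define F :: "nat \<Rightarrow> bool list \<Rightarrow> real" where
    "F i l = (if i = 0 then f (l!0) else if i = 1 then g (l!0, l!1) else h (l!0, l!1, l!2, l!3))"
    for i l
  have "range (F i) \<subseteq> range f \<union> range g \<union> range h" for i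
    by (auto simp: F_def)
  then have bounded: "bounded (range (F i))" for i
    by (rule finite_imp_bounded[OF finite_subset]) simp
  have blocks: "F i (potential_blocks D Mp Yp i x)
      = (if i = 0 then f (D x) else if i = 1 then g (Mpair x) else h (Yquad x))" for i x
    by (simp add: F_def potential_blocks_def Mpair_def Yquad_def)
  have prod_blocks: "(\<Prod>i\<in>{0, 1, 2}. F i (potential_blocks D Mp Yp i x))
      = f (D x) * g (Mpair x) * h (Yquad x)" for x
    by (simp add: blocks)
  have prod_integrals: "(\<Prod>i\<in>{0, 1, 2}. \<integral>x. F i (potential_blocks D Mp Yp i x) \<partial>P)
      = (\<integral>x. f (D x) \<partial>P) * (\<integral>x. g (Mpair x) \<partial>P) * (\<integral>x. h (Yquad x) \<partial>P)"
    by (simp add: blocks)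
  note prod = indep_vars_integral_prod_bounded[where F = F, OF _ indep_blocks bounded]
  show "integrable P (\<lambda>x. f (D x) * g (Mpair x) * h (Yquad x))"
    using prod(1) unfolding prod_blocks by simp
  show "(\<integral>x. f (D x) * g (Mpair x) * h (Yquad x) \<partial>P)
         = (\<integral>x. f (D x) \<partial>P) * (\<integral>x. g (Mpair x) \<partial>P) * (\<integral>x. h (Yquad x) \<partial>P)"
    using prod(2) unfolding prod_blocks prod_integrals by simp
qed

lemma integrable_Mpair:
  fixes g :: "bool \<times> bool \<Rightarrow> real"
  shows "integrable P (\<lambda>x. g (Mpair x))"
  using integral_factorizes(1)[of "\<lambda>_. 1" g "\<lambda>_. 1"] by simp

lemma integrable_Yp: "integrable P (\<lambda>x. of_bool (Yp d m x) :: real)"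
  using integral_factorizes(1)[of "\<lambda>_. 1" "\<lambda>_. 1"
      "\<lambda>(y00, y01, y10, y11). of_bool (if d then if m then y11 else y10 else if m then y01 else y00)"]
  by (cases d; cases m) (simp_all add: Yquad_def)

lemma integral_D_Mpair:
  fixes f :: "bool \<Rightarrow> real" and g :: "bool \<times> bool \<Rightarrow> real"
  shows "integrable P (\<lambda>x. f (D x) * g (Mpair x))"
    and "(\<integral>x. f (D x) * g (Mpair x) \<partial>P) = (\<integral>x. f (D x) \<partial>P) * (\<integral>x. g (Mpair x) \<partial>P)"
  using integral_factorizes[of f g "\<lambda>_. 1"] by (simp_all add: prob_space)

abbreviation treated_prob :: real where
  "treated_prob \<equiv> measure P {x \<in> space P. D x}"

abbreviation stratum_prob :: "stratum \<Rightarrow> real" where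
  "stratum_prob s \<equiv> measure P {x \<in> space P. strat Mp x = s}"

abbreviation stratum_ate :: "stratum \<Rightarrow> real" where
  "stratum_ate s \<equiv> cond_exp_ev P (effect Mp Yp) {x \<in> space P. strat Mp x = s}"

abbreviation force_if_stopped :: "bool \<Rightarrow> real" where
  "force_if_stopped d \<equiv> \<integral>x. of_bool (Yp d True x) \<partial>P"

lemma integral_D:
  fixes f :: "bool \<Rightarrow> real"
  shows "(\<integral>x. f (D x) \<partial>P) = f True * treated_prob + f False * (1 - treated_prob)"
proof -
  have "(\<integral>x. f (D x) \<partial>P) = (\<integral>x. f False + (f True - f False) * of_bool (D x) \<partial>P)"
    by (rule Bochner_Integration.integral_cong) auto
  also have "\<dots> = f False + (f True - f False) * treated_prob"
    using integral_factorizes(1)[of of_bool "\<lambda>_. 1" "\<lambda>_. 1"]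
    by (simp add: measure_Collect_eq_integral prob_space)
  finally show ?thesis by (simp add: algebra_simps)
qed

lemma integral_Mpair:
  fixes g :: "bool \<times> bool \<Rightarrow> real"
  shows "(\<integral>x. g (Mpair x) \<partial>P) = g (True, True) * stratum_prob Al + g (False, True) * stratum_prob Mi
     + g (True, False) * stratum_prob Ma + g (False, False) * stratum_prob Ne"
proof -
  let ?ind = "\<lambda>s x. of_bool (pair_stratum (Mpair x) = s) :: real"
  have "g (Mpair x) = g (True, True) * ?ind Al x + g (False, True) * ?ind Mi x
      + g (True, False) * ?ind Ma x + g (False, False) * ?ind Ne x" for x
    by (cases "Mpair x") (simp add: pair_stratum_def split: bool.split)
  moreover have "(\<integral>x. ?ind s x \<partial>P) = stratum_prob s" for s
    by (simp add: measure_Collect_eq_integral strat_eq_pair_stratum Mpair_def)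
  moreover have "integrable P (?ind s)" for s
    by (rule integrable_Mpair)
  ultimately show ?thesis
    by simp
qed

lemma stratum_prob_sum: "stratum_prob Al + stratum_prob Mi + stratum_prob Ma + stratum_prob Ne = 1"
  using integral_Mpair[of "\<lambda>_. 1"] by (simp add: prob_space)

lemma stratum_prob_Mi:
  "stratum_prob Mi = stratum_prob Ma + (\<integral>x. of_bool (Mp True x) - of_bool (Mp False x) \<partial>P)"
  using integral_Mpair[of "\<lambda>(m0, m1). of_bool m1 - of_bool m0"] by (simp add: Mpair_def)

lemma untreated_prob: "measure P {x \<in> space P. \<not> D x} = 1 - treated_prob"
  using integral_D[of "\<lambda>b. of_bool (\<not> b)"] by (simp add: measure_Collect_eq_integral)

lemma integral_force_unstopped: "(\<integral>x. of_bool (Yp d False x) \<partial>P) = 0"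
  by (rule integral_eq_zero_AE) (use mandatory_reporting in \<open>cases d; auto elim: AE_mp\<close>)

lemma integral_effect_factorizes:
  fixes f :: "bool \<Rightarrow> real" and g :: "bool \<times> bool \<Rightarrow> real"
  shows "integrable P (\<lambda>x. effect Mp Yp x * f (D x) * g (Mpair x))"
    and "(\<integral>x. effect Mp Yp x * f (D x) * g (Mpair x) \<partial>P) = (\<integral>x. f (D x) \<partial>P)
          * ((g (True, True) * stratum_prob Al + g (False, True) * stratum_prob Mi) * force_if_stopped True
            - (g (True, True) * stratum_prob Al + g (True, False) * stratum_prob Ma) * force_if_stopped False)"
proof -
  define summand :: "(bool \<times> bool \<Rightarrow> bool) \<Rightarrow> (bool \<times> bool \<times> bool \<times> bool \<Rightarrow> bool) \<Rightarrow> 'a \<Rightarrow> real"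
    where "summand m y x = f (D x) * (g (Mpair x) * of_bool (m (Mpair x))) * of_bool (y (Yquad x))"
    for m y x
  have effect: "effect Mp Yp x * f (D x) * g (Mpair x)
      = summand snd (\<lambda>(_, _, _, y11). y11) x + summand (Not \<circ> snd) (\<lambda>(_, _, y10, _). y10) x
      - summand fst (\<lambda>(_, y01, _, _). y01) x - summand (Not \<circ> fst) (\<lambda>(y00, _, _, _). y00) x" for x
    by (simp add: summand_def effect_def Ypot_def Mpair_def Yquad_def algebra_simps)
  have integrable: "integrable P (summand m y)" for m y
    using integral_factorizes(1) unfolding summand_def .
  have integral: "(\<integral>x. summand m y x \<partial>P)
      = (\<integral>x. f (D x) \<partial>P) * (\<integral>x. g (Mpair x) * of_bool (m (Mpair x)) \<partial>P) * (\<integral>x. of_bool (y (Yquad x)) \<partial>P)"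
    for m y
    using integral_factorizes(2) unfolding summand_def .
  show "integrable P (\<lambda>x. effect Mp Yp x * f (D x) * g (Mpair x))"
    unfolding effect using integrable by simp
  show "(\<integral>x. effect Mp Yp x * f (D x) * g (Mpair x) \<partial>P) = (\<integral>x. f (D x) \<partial>P)
          * ((g (True, True) * stratum_prob Al + g (False, True) * stratum_prob Mi) * force_if_stopped True
            - (g (True, True) * stratum_prob Al + g (True, False) * stratum_prob Ma) * force_if_stopped False)"
    unfolding effect using integrable
    by (simp add: integral integral_Mpair[of "\<lambda>p. g p * of_bool (snd p)"]
        integral_Mpair[of "\<lambda>p. g p * of_bool (fst p)"] integral_force_unstopped Yquad_def
        algebra_simps)
qed

definition stratum_effect :: "stratum \<Rightarrow> real" where
  "stratum_effect s = (case s of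
      Al \<Rightarrow> force_if_stopped True - force_if_stopped False
    | Mi \<Rightarrow> force_if_stopped True
    | Ma \<Rightarrow> - force_if_stopped False
    | Ne \<Rightarrow> 0)"

lemma stratum_ate_eq:
  assumes "stratum_prob s \<noteq> 0"
  shows "stratum_ate s = stratum_effect s"
proof -
  let ?g = "\<lambda>p. of_bool (pair_stratum p = s) :: real"
  have "(\<integral>x. effect Mp Yp x * of_bool (strat Mp x = s) \<partial>P)
      = (\<integral>x. effect Mp Yp x * 1 * ?g (Mpair x) \<partial>P)"
    by (simp add: strat_eq_pair_stratum Mpair_def)
  also have "\<dots> = stratum_prob s * stratum_effect s"
    unfolding integral_effect_factorizes(2)[of "\<lambda>_. 1" ?g]
    by (cases s) (simp_all add: pair_stratum_def stratum_effect_def prob_space algebra_simps)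
  finally show ?thesis
    using assms by (simp add: cond_exp_ev_Collect measure_Collect_eq_integral)
qed

lemma wavg_stratum_ate:
  assumes "\<And>s. stratum_prob s = 0 \<Longrightarrow> w s = 0"
  shows "wavg w stratum_ate = wavg w stratum_effect"
  by (rule wavg_cong_weighted) (metis assms mult_zero_left stratum_ate_eq)

lemma integral_effect_eq_wavg: "(\<integral>x. effect Mp Yp x \<partial>P) = wavg stratum_prob stratum_effect"
  using integral_effect_factorizes(2)[of "\<lambda>_. 1" "\<lambda>_. 1"] stratum_prob_sum
  by (simp add: wavg_def stratum_effect_def prob_space algebra_simps)

lemma cond_exp_treated_eq_wavg:
  assumes "treated_prob \<noteq> 0"
  shows "cond_exp_ev P (effect Mp Yp) {x \<in> space P. D x} = wavg stratum_prob stratum_effect"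
proof -
  have "(\<integral>x. effect Mp Yp x * of_bool (D x) \<partial>P) = treated_prob * (\<integral>x. effect Mp Yp x \<partial>P)"
    using integral_effect_factorizes(2)[of of_bool "\<lambda>_. 1"]
      integral_effect_factorizes(2)[of "\<lambda>_. 1" "\<lambda>_. 1"]
    by (simp add: integral_D prob_space)
  then show ?thesis
    using assms by (simp add: cond_exp_ev_Collect measure_Collect_eq_integral integral_effect_eq_wavg)
qed

text \<open>No positivity assumption is needed: numerator and denominator agree with those of
  \<open>wavg\<close>, so both sides are \<open>0\<close> when \<open>P(M = 1) = 0\<close>.\<close>

lemma cond_exp_stopped_eq_wavg:
  "cond_exp_ev P (effect Mp Yp) {x \<in> space P. Mobs D Mp x}
    = wavg (\<lambda>s. stratum_prob s * (case s of
          Al \<Rightarrow> 1 | Mi \<Rightarrow> treated_prob | Ma \<Rightarrow> 1 - treated_prob | Ne \<Rightarrow> 0))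
        stratum_effect"
proof -
  have stopped: "(of_bool (Mobs D Mp x) :: real)
      = of_bool (D x) * of_bool (snd (Mpair x)) + of_bool (\<not> D x) * of_bool (fst (Mpair x))" for x
    by (simp add: Mobs_def Mpair_def)
  have num: "(\<integral>x. effect Mp Yp x * of_bool (Mobs D Mp x) \<partial>P)
      = stratum_prob Al * stratum_effect Al + stratum_prob Mi * treated_prob * stratum_effect Mi
        + stratum_prob Ma * (1 - treated_prob) * stratum_effect Ma"
    using integral_effect_factorizes[of of_bool "\<lambda>p. of_bool (snd p)"]
      integral_effect_factorizes[of "\<lambda>b. of_bool (\<not> b)" "\<lambda>p. of_bool (fst p)"]
    by (simp add: stopped distrib_left integral_D integral_D[of "\<lambda>b. of_bool (\<not> b)"]
        stratum_effect_def algebra_simps)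
  have den: "(\<integral>x. of_bool (Mobs D Mp x) \<partial>P)
      = stratum_prob Al + stratum_prob Mi * treated_prob + stratum_prob Ma * (1 - treated_prob)"
    using integral_D_Mpair[of of_bool "\<lambda>p. of_bool (snd p)"]
      integral_D_Mpair[of "\<lambda>b. of_bool (\<not> b)" "\<lambda>p. of_bool (fst p)"]
    by (simp add: stopped integral_D integral_D[of "\<lambda>b. of_bool (\<not> b)"]
        integral_Mpair[of "\<lambda>p. of_bool (snd p)"] integral_Mpair[of "\<lambda>p. of_bool (fst p)"]
        algebra_simps)
  show ?thesis
    unfolding cond_exp_ev_Collect num den wavg_def by simp
qed

lemma cond_exp_treated_stopped_eq_wavg:
  assumes "measure P {x \<in> space P. D x \<and> Mobs D Mp x} \<noteq> 0"
  shows "cond_exp_ev P (effect Mp Yp) {x \<in> space P. D x \<and> Mobs D Mp x}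
    = wavg (\<lambda>s. stratum_prob s * (case s of Al \<Rightarrow> 1 | Mi \<Rightarrow> 1 | Ma \<Rightarrow> 0 | Ne \<Rightarrow> 0))
        stratum_effect"
proof -
  have treated_stopped: "(of_bool (D x \<and> Mobs D Mp x) :: real)
      = of_bool (D x) * of_bool (snd (Mpair x))" for x
    by (cases "D x") (simp_all add: Mobs_def Mpair_def)
  have num: "(\<integral>x. effect Mp Yp x * of_bool (D x \<and> Mobs D Mp x) \<partial>P)
      = treated_prob * (stratum_prob Al * stratum_effect Al + stratum_prob Mi * stratum_effect Mi)"
    using integral_effect_factorizes(2)[of of_bool "\<lambda>p. of_bool (snd p)"]
    by (simp add: treated_stopped integral_D stratum_effect_def mult.assoc algebra_simps)
  have den: "(\<integral>x. of_bool (D x \<and> Mobs D Mp x) \<partial>P)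
      = treated_prob * (stratum_prob Al + stratum_prob Mi)"
    using integral_D_Mpair(2)[of of_bool "\<lambda>p. of_bool (snd p)"]
    by (simp add: treated_stopped integral_D integral_Mpair[of "\<lambda>p. of_bool (snd p)"])
  show ?thesis
    using assms unfolding measure_Collect_eq_integral cond_exp_ev_Collect num den wavg_def by simp
qed

end

theorem propositionA1:
  fixes P :: "'a measure"
    and D :: "'a \<Rightarrow> bool"
    and Mp :: "bool \<Rightarrow> 'a \<Rightarrow> bool"
    and Yp :: "bool \<Rightarrow> bool \<Rightarrow> 'a \<Rightarrow> bool"
    and \<beta>M \<beta>Y :: real
    and pS \<theta> :: "stratum \<Rightarrow> real"
    and wATEM wATTM wATE :: "stratum \<Rightarrow> real"
  assumes ps: "prob_space P"
    and indep: "prob_space.indep_vars P (\<lambda>_. count_space UNIV)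
          (\<lambda>i x. if i = 0 then [D x]
                 else if i = 1 then [Mp False x, Mp True x]
                 else [Yp False False x, Yp False True x, Yp True False x, Yp True True x])
          {0, 1, 2 :: nat}"
    and mand: "AE x in P. \<not> Yp False False x \<and> \<not> Yp True False x"
  defines "\<beta>M \<equiv> (\<integral>x. of_bool (Mp True x) - of_bool (Mp False x) \<partial>P)"
    and "\<beta>Y \<equiv> (\<integral>x. of_bool (Yp True True x) - of_bool (Yp False True x) \<partial>P)"
    and "pS \<equiv> (\<lambda>s. measure P {x \<in> space P. strat Mp x = s})"
    and "\<theta> \<equiv> (\<lambda>s. cond_exp_ev P (effect Mp Yp) {x \<in> space P. strat Mp x = s})"
    and "wATEM \<equiv> (\<lambda>s. case s of
            Al \<Rightarrow> pS Al
          | Mi \<Rightarrow> (pS Ma + \<beta>M) * measure P {x \<in> space P. D x}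
          | Ma \<Rightarrow> pS Ma * measure P {x \<in> space P. \<not> D x}
          | Ne \<Rightarrow> 0)"
    and "wATTM \<equiv> (\<lambda>s. case s of
            Al \<Rightarrow> pS Al
          | Mi \<Rightarrow> pS Ma + \<beta>M
          | Ma \<Rightarrow> 0
          | Ne \<Rightarrow> 0)"
    and "wATE \<equiv> (\<lambda>s. case s of
            Al \<Rightarrow> pS Al
          | Mi \<Rightarrow> pS Mi
          | Ma \<Rightarrow> pS Ma
          | Ne \<Rightarrow> pS Ne)"
  shows "(pS Al > 0 \<longrightarrow> \<theta> Al = \<beta>Y)
       \<and> (pS Mi > 0 \<longrightarrow> \<theta> Mi = \<beta>Y + (\<integral>x. of_bool (Yp False True x) \<partial>P))
       \<and> (pS Ma > 0 \<longrightarrow> \<theta> Ma = - (\<integral>x. of_bool (Yp False True x) \<partial>P))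
       \<and> (pS Ne > 0 \<longrightarrow> \<theta> Ne = 0)
       \<and> pS Mi = pS Ma + \<beta>M
       \<and> (measure P {x \<in> space P. Mobs D Mp x} > 0 \<longrightarrow>
            cond_exp_ev P (effect Mp Yp) {x \<in> space P. Mobs D Mp x} = wavg wATEM \<theta>)
       \<and> (measure P {x \<in> space P. D x \<and> Mobs D Mp x} > 0 \<longrightarrow>
            cond_exp_ev P (effect Mp Yp) {x \<in> space P. D x \<and> Mobs D Mp x} = wavg wATTM \<theta>)
       \<and> (\<integral>x. effect Mp Yp x \<partial>P) = wavg wATE \<theta>
       \<and> (measure P {x \<in> space P. D x} > 0 \<longrightarrow>
            cond_exp_ev P (effect Mp Yp) {x \<in> space P. D x} = wavg wATE \<theta>)"
proof -
  have "stop_force_model P D Mp Yp"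
    using ps indep mand by (simp add: stop_force_model_def stop_force_model_axioms_def potential_blocks_def)
  then interpret stop_force_model P D Mp Yp .
  note defs = assms(4-10)
  have \<beta>Y: "\<beta>Y = force_if_stopped True - force_if_stopped False"
    by (simp add: defs integrable_Yp)
  have Mi: "pS Mi = pS Ma + \<beta>M"
    by (simp add: defs stratum_prob_Mi)
  have strata: "\<theta> s = stratum_effect s" if "pS s > 0" for s
    using that stratum_ate_eq[of s] by (simp add: defs)
  have weighted: "wavg w \<theta> = wavg w stratum_effect" if "\<And>s. pS s = 0 \<Longrightarrow> w s = 0" for w
    using that wavg_stratum_ate[of w] by (simp add: defs)
  have wATEM: "wATEM = (\<lambda>s. pS s * (case s of
      Al \<Rightarrow> 1 | Mi \<Rightarrow> treated_prob | Ma \<Rightarrow> 1 - treated_prob | Ne \<Rightarrow> 0))"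
    by (auto simp: Mi untreated_prob assms(8) split: stratum.split)
  have wATTM: "wATTM = (\<lambda>s. pS s * (case s of Al \<Rightarrow> 1 | Mi \<Rightarrow> 1 | Ma \<Rightarrow> 0 | Ne \<Rightarrow> 0))"
    by (auto simp: Mi assms(9) split: stratum.split)
  have wATE: "wATE = pS"
    by (auto simp: assms(10) split: stratum.split)
  have reweight: "wavg wATEM \<theta> = wavg wATEM stratum_effect" "wavg wATTM \<theta> = wavg wATTM stratum_effect"
      "wavg wATE \<theta> = wavg wATE stratum_effect"
    by (rule weighted; simp add: wATEM wATTM wATE)+
  show ?thesis
    using strata[of Al] strata[of Mi] strata[of Ma] strata[of Ne] Mi reweight
      cond_exp_stopped_eq_wavg cond_exp_treated_stopped_eq_wavg integral_effect_eq_wavg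
      cond_exp_treated_eq_wavg
    by (simp add: \<beta>Y stratum_effect_def wATEM wATTM wATE assms(6))
qed

end
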